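(* Let $\psi:\mathbb R\to\mathbb R$ satisfy $-\log(1-x+x^2/2)\leq \psi(x)\leq \log(1+x+x^2/2)$ for all $x\in\mathbb R$. Let $Y\in\mathbb C^{d\times d}$ be a self-adjoint random matrix with finite second moments of entries, let $\theta>0$, and for a (deterministic) self-adjoint $S\in\mathbb C^{d\times d}$ let $X(S):=\psi(\theta(Y-S))$. Then for every self-adjoint $S$, \[ \Big\| S- \mathbb EY + \frac{1}{\theta}\mathbb E X(S) \Big\|\leq \frac{\theta}{2}\left\| \mathbb E(Y - S)^2 \right\|. \]
   Context: $\|\cdot\|$ is the operator norm. For a real function $f$ and a self-adjoint matrix $A=U\,\mathrm{diag}(\lambda_i)\,U^\ast$, $f(A):=U\,\mathrm{diag}(f(\lambda_i))\,U^\ast$. Expectations are entrywise. *)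

theory Defs
  imports "HOL-Probability.Probability"
begin

text \<open>Complex d x d matrices are rendered as complex ^'n ^'n with 'n a finite type (d = CARD('n)).\<close>

definition adjoint_mat :: "complex ^'n ^'n \<Rightarrow> complex ^'n ^'n" where
  "adjoint_mat A = (\<chi> i j. cnj (A $ j $ i))"

definition self_adjoint :: "complex ^'n ^'n \<Rightarrow> bool" where
  "self_adjoint A \<longleftrightarrow> adjoint_mat A = A"

definition unitary_mat :: "complex ^'n ^'n \<Rightarrow> bool" where
  "unitary_mat U \<longleftrightarrow> adjoint_mat U ** U = mat 1 \<and> U ** adjoint_mat U = mat 1"

definition diag_mat :: "('n \<Rightarrow> real) \<Rightarrow> complex ^'n ^'n" where
  "diag_mat l = (\<chi> i j. if i = j then complex_of_real (l i) else 0)"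

text \<open>Functional calculus: f(A) = U diag(f(lambda_i)) U^* for a spectral decomposition
  A = U diag(lambda_i) U^* (well defined for self-adjoint A).\<close>
definition matfun :: "(real \<Rightarrow> real) \<Rightarrow> complex ^'n ^'n \<Rightarrow> complex ^'n ^'n" where
  "matfun f A = (SOME B. \<exists>U l. unitary_mat U \<and> A = U ** diag_mat l ** adjoint_mat U
                        \<and> B = U ** diag_mat (f \<circ> l) ** adjoint_mat U)"

definition opnorm :: "complex ^'n ^'n \<Rightarrow> real" where
  "opnorm A = onorm (\<lambda>v::complex^'n. A *v v)"

definition mat_expect :: "'a measure \<Rightarrow> ('a \<Rightarrow> complex ^'n ^'n) \<Rightarrow> complex ^'n ^'n" where
  "mat_expect M Z = (\<chi> i j. LINT w|M. Z w $ i $ j)"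

end

theory Submission
  imports Defs
begin

text \<open>
  With \<open>A = \<theta> (Y - S)\<close> the matrix on the left equals \<open>\<theta>\<^sup>-\<^sup>1 (\<bbbE> \<psi>(A) - \<bbbE> A)\<close>.
  The hypothesis on \<open>\<psi>\<close> gives \<open>\<bar>\<psi>(x) - x\<bar> \<le> x\<^sup>2/2\<close> (via \<open>ln y \<le> y - 1\<close>), and in an
  eigenbasis of \<open>A\<close> this becomes \<open>\<bar>\<langle>(\<psi>(A) - A) v, v\<rangle>\<bar> \<le> \<langle>A\<^sup>2 v, v\<rangle> / 2\<close>. Taking
  expectations preserves this inequality between quadratic forms, and for self-adjoint \<open>H\<close> a
  bound \<open>\<bar>\<langle>H v, v\<rangle>\<bar> \<le> \<langle>G v, v\<rangle>\<close> for all \<open>v\<close> gives \<open>\<parallel>H\<parallel> \<le> \<parallel>G\<parallel>\<close>.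
  The supporting facts are the spectral theorem (by maximising the Rayleigh quotient),
  measurability of \<open>\<omega> \<mapsto> \<psi>(A \<omega>)\<close> (from polynomials by Stone-Weierstrass and a
  monotone-class argument), and integrability of all matrices involved, from the second moments.
\<close>

section \<open>The Hermitian inner product and adjoints\<close>

definition cinner :: "complex^'n \<Rightarrow> complex^'n \<Rightarrow> complex" where
  "cinner x y = (\<Sum>i\<in>UNIV. x$i * cnj (y$i))"

lemma adjoint_mat_nth [simp]: "adjoint_mat A $ i $ j = cnj (A $ j $ i)"
  by (simp add: adjoint_mat_def)

lemma adjoint_mat_adjoint_mat [simp]: "adjoint_mat (adjoint_mat A) = A"
  by (simp add: vec_eq_iff)

lemma adjoint_mat_mult: "adjoint_mat (A ** B) = adjoint_mat B ** adjoint_mat A"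
  by (simp add: vec_eq_iff matrix_matrix_mult_def mult.commute)

lemma cinner_matrix_vector_mult: "cinner (A *v x) y = cinner x (adjoint_mat A *v y)"
proof -
  have "cinner (A *v x) y = (\<Sum>i\<in>UNIV. \<Sum>j\<in>UNIV. A$i$j * x$j * cnj (y$i))"
    unfolding cinner_def matrix_vector_mult_def by (simp add: sum_distrib_right)
  also have "\<dots> = (\<Sum>j\<in>UNIV. \<Sum>i\<in>UNIV. A$i$j * x$j * cnj (y$i))" by (rule sum.swap)
  also have "\<dots> = cinner x (adjoint_mat A *v y)"
    unfolding cinner_def matrix_vector_mult_def by (simp add: sum_distrib_left mult_ac)
  finally show ?thesis .
qed

lemma cnj_cinner: "cnj (cinner x y) = cinner y x"
  by (simp add: cinner_def mult.commute)

lemma cinner_self: "cinner x x = of_real ((norm x)\<^sup>2)"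
proof -
  have "(norm x)\<^sup>2 = (\<Sum>i\<in>UNIV. (cmod (x$i))\<^sup>2)"
    by (simp add: norm_vec_def L2_set_def sum_nonneg)
  then show ?thesis
    unfolding cinner_def by (simp only: complex_norm_square of_real_sum)
qed

lemma cinner_add_left: "cinner (x + y) z = cinner x z + cinner y z"
  by (simp add: cinner_def distrib_right sum.distrib)

lemma cinner_add_right: "cinner z (x + y) = cinner z x + cinner z y"
  by (simp add: cinner_def distrib_left sum.distrib)

lemma cinner_diff_left: "cinner (x - y) z = cinner x z - cinner y z"
  by (simp add: cinner_def left_diff_distrib sum_subtractf)

lemma cinner_smult_left: "cinner (c *s x) y = c * cinner x y"
  by (simp add: cinner_def sum_distrib_left mult_ac)

lemma cinner_smult_right: "cinner x (c *s y) = cnj c * cinner x y"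
  by (simp add: cinner_def sum_distrib_left mult_ac)

lemma cinner_zero_left [simp]: "cinner 0 y = 0"
  by (simp add: cinner_def)

lemma cinner_sum_left: "cinner (sum f A) y = (\<Sum>a\<in>A. cinner (f a) y)"
  by (induct A rule: infinite_finite_induct) (auto simp: cinner_add_left)

lemma matrix_vector_mult_smult: "(A::complex^'n^'m) *v (c *s x) = c *s (A *v x)"
  by (simp add: matrix_vector_mult_def vec_eq_iff sum_distrib_left mult.left_commute)

lemma scaleR_eq_of_real_smult: "r *\<^sub>R (x::complex^'n) = complex_of_real r *s x"
  unfolding vec_eq_iff by (auto simp: scaleR_conv_of_real[where 'a=complex])

lemma norm_cinner_le: "cmod (cinner x y) \<le> norm x * norm y"
proof -
  have "cmod (cinner x y) \<le> (\<Sum>i\<in>UNIV. cmod (x$i) * cmod (y$i))"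
    unfolding cinner_def by (rule order_trans[OF norm_sum]) (simp add: norm_mult)
  also have "\<dots> \<le> L2_set (\<lambda>i. cmod (x$i)) UNIV * L2_set (\<lambda>i. cmod (y$i)) UNIV"
    using L2_set_mult_ineq[of "\<lambda>i. cmod (x$i)" "\<lambda>i. cmod (y$i)" UNIV] by simp
  finally show ?thesis by (simp add: norm_vec_def)
qed

lemma self_adjoint_cinner:
  "self_adjoint A \<Longrightarrow> cinner (A *v x) y = cinner x (A *v y)"
  by (simp add: cinner_matrix_vector_mult self_adjoint_def)

lemma self_adjoint_cinner_real:
  assumes "self_adjoint A"
  shows "cinner (A *v x) x = of_real (Re (cinner (A *v x) x))"
proof -
  have "cnj (cinner (A *v x) x) = cinner (A *v x) x"
    by (simp add: cnj_cinner self_adjoint_cinner[OF assms])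
  then show ?thesis by (simp add: complex_eq_iff)
qed

lemma self_adjoint_diff: "self_adjoint A \<Longrightarrow> self_adjoint B \<Longrightarrow> self_adjoint (A - B)"
  unfolding self_adjoint_def by (simp add: vec_eq_iff)

lemma self_adjoint_scaleR: "self_adjoint A \<Longrightarrow> self_adjoint (r *\<^sub>R A)"
  unfolding self_adjoint_def by (simp add: vec_eq_iff)

section \<open>The spectral theorem for self-adjoint matrices\<close>

text \<open>
  Otherwise every vector is its projection onto the \<open>f i\<close>, so the \<open>2 k < 2 n\<close> real vectors
  \<open>f i\<close>, \<open>\<i> f i\<close> would span \<open>\<complex>\<^sup>n\<close>.
\<close>
lemma exists_orthogonal_to_orthonormal:
  fixes f :: "nat \<Rightarrow> complex^'n"
  assumes orthonormal: "\<And>i j. i < k \<Longrightarrow> j < k \<Longrightarrow> cinner (f i) (f j) = (if i = j then 1 else 0)"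
    and k: "k < CARD('n)"
  shows "\<exists>x. x \<noteq> 0 \<and> (\<forall>i<k. cinner x (f i) = 0)"
proof (rule ccontr)
  assume no_orthogonal: "\<not> ?thesis"
  let ?B = "f ` {..<k} \<union> (\<lambda>i. \<i> *s f i) ` {..<k}"
  have "UNIV \<subseteq> span ?B"
  proof
    fix x :: "complex^'n"
    let ?p = "\<Sum>i<k. cinner x (f i) *s f i"
    have "cinner (x - ?p) (f j) = 0" if "j < k" for j
    proof -
      have "cinner ?p (f j) = (\<Sum>i<k. cinner x (f i) * (if i = j then 1 else 0))"
        using orthonormal that by (simp add: cinner_sum_left cinner_smult_left)
      also have "\<dots> = cinner x (f j)" using that by (simp add: if_distrib cong: if_cong)
      finally show ?thesis by (simp add: cinner_diff_left)
    qed
    then have "x - ?p = 0" using no_orthogonal by blast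
    then have "x = ?p" by simp
    also have "\<dots> \<in> span ?B"
    proof (intro span_sum)
      fix i assume "i \<in> {..<k}"
      have "cinner x (f i) *s f i = Re (cinner x (f i)) *\<^sub>R f i + Im (cinner x (f i)) *\<^sub>R (\<i> *s f i)"
        by (simp add: vec_eq_iff complex_eq_iff)
      also have "\<dots> \<in> span ?B"
        using \<open>i \<in> {..<k}\<close> by (intro span_add span_scale span_base) auto
      finally show "cinner x (f i) *s f i \<in> span ?B" .
    qed
    finally show "x \<in> span ?B" .
  qed
  then have "dim (UNIV::(complex^'n) set) \<le> card ?B" by (intro span_card_ge_dim) auto
  also have "\<dots> \<le> card (f ` {..<k}) + card ((\<lambda>i. \<i> *s f i) ` {..<k})" by (rule card_Un_le)
  also have "\<dots> \<le> k + k" by (intro add_mono card_image_le[THEN order_trans]) auto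
  finally show False using k by simp
qed

lemma linear_coeff_eq_0_if_quadratic_nonpos:
  fixes a b :: real
  assumes nonpos: "\<And>t. 2*t*a + t\<^sup>2*b \<le> 0"
  shows "a = 0"
proof (rule ccontr)
  assume "a \<noteq> 0"
  define t where "t = a / (\<bar>b\<bar> + 1)"
  have "\<bar>t*b\<bar> = \<bar>a\<bar> * (\<bar>b\<bar> / (\<bar>b\<bar> + 1))"
    unfolding t_def by (simp add: abs_mult)
  also have "\<dots> < \<bar>a\<bar> * 1"
    using \<open>a \<noteq> 0\<close> by (intro mult_strict_left_mono) auto
  finally have "\<bar>t*b\<bar> < \<bar>a\<bar>" by simp
  moreover have "sgn t = sgn a"
    unfolding t_def by (simp add: add_pos_nonneg)
  ultimately have "t * (2*a + t*b) > 0"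
    using \<open>a \<noteq> 0\<close> by (auto simp: sgn_if zero_less_mult_iff split: if_splits)
  with nonpos[of t] show False by (simp add: power2_eq_square algebra_simps)
qed

text \<open>First variation of the Rayleigh quotient at a maximiser \<open>v\<close> over a complex subspace \<open>W\<close>.\<close>
lemma self_adjoint_maximiser_orthogonal:
  fixes A :: "complex^'n^'n"
  assumes sa: "self_adjoint A"
    and W: "\<And>x y c. x \<in> W \<Longrightarrow> y \<in> W \<Longrightarrow> x + c *s y \<in> W"
    and v: "v \<in> W" "norm v = 1"
    and max: "\<And>x. x \<in> W \<Longrightarrow> Re (cinner (A *v x) x) \<le> Re (cinner (A *v v) v) * (norm x)\<^sup>2"
    and w: "w \<in> W" "cinner w v = 0"
  shows "cinner (A *v v) w = 0"
proof -
  define Q where "Q x = Re (cinner (A *v x) x)" for x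
  have Re_zero: "Re (cinner (A *v v) u) = 0" if "u \<in> W" "cinner u v = 0" for u
  proof (rule linear_coeff_eq_0_if_quadratic_nonpos)
    fix t :: real
    define x where "x = v + complex_of_real t *s u"
    have "cinner v u = 0" using \<open>cinner u v = 0\<close> cnj_cinner[of u v] by simp
    then have "cinner x x = cinner v v + complex_of_real (t\<^sup>2) * cinner u u"
      using \<open>cinner u v = 0\<close>
      by (simp add: x_def cinner_add_left cinner_add_right cinner_smult_left cinner_smult_right
          power2_eq_square)
    then have "complex_of_real ((norm x)\<^sup>2) = complex_of_real (1 + t\<^sup>2 * (norm u)\<^sup>2)"
      using v(2) unfolding cinner_self by simp
    then have "(norm x)\<^sup>2 = 1 + t\<^sup>2 * (norm u)\<^sup>2"
      by (simp only: of_real_eq_iff)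
    moreover have "Q x = Q v + 2*t*Re (cinner (A *v v) u) + t\<^sup>2 * Q u"
      using arg_cong[OF cnj_cinner[of "A *v v" u], of Re]
      by (simp add: Q_def x_def matrix_vector_right_distrib matrix_vector_mult_smult
          cinner_add_left cinner_add_right cinner_smult_left cinner_smult_right
          self_adjoint_cinner[OF sa, of u v] power2_eq_square algebra_simps)
    moreover have "Q x \<le> Q v * (norm x)\<^sup>2"
      unfolding Q_def by (rule max) (use W v(1) \<open>u \<in> W\<close> x_def in blast)
    ultimately show "2*t*Re (cinner (A *v v) u) + t\<^sup>2 * (Q u - Q v * (norm u)\<^sup>2) \<le> 0"
      by (simp add: algebra_simps)
  qed
  have "0 \<in> W" using W[OF v(1) v(1), of "-1"] by simp
  then have "\<i> *s w \<in> W" using W[OF _ w(1), of 0 \<i>] by simp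
  moreover have "cinner (\<i> *s w) v = 0" using w(2) by (simp add: cinner_smult_left)
  ultimately have "Re (cinner (A *v v) (\<i> *s w)) = 0" by (rule Re_zero)
  then have "Im (cinner (A *v v) w) = 0" by (simp add: cinner_smult_right)
  with Re_zero[OF w] show ?thesis by (simp add: complex_eq_iff)
qed

lemma exists_Rayleigh_maximiser:
  fixes A :: "complex^'n^'n" and f :: "nat \<Rightarrow> complex^'n"
  assumes x0: "x0 \<noteq> 0" "\<forall>i<k. cinner x0 (f i) = 0"
  obtains v where "\<forall>i<k. cinner v (f i) = 0" "norm v = 1"
    "\<And>x. \<forall>i<k. cinner x (f i) = 0 \<Longrightarrow> Re (cinner (A *v x) x) \<le> Re (cinner (A *v v) v) * (norm x)\<^sup>2"
proof -
  define W where "W = {x. \<forall>i<k. cinner x (f i) = 0}"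
  define Q where "Q x = Re (cinner (A *v x) x)" for x
  have continuous_cinner: "continuous_on UNIV (\<lambda>x. cinner x c)" for c :: "complex^'n"
    unfolding cinner_def by (intro continuous_intros)
  have K_eq: "W \<inter> sphere 0 1 = (\<Inter>i\<in>{..<k}. {x. cinner x (f i) = 0}) \<inter> sphere 0 1"
    unfolding W_def by auto
  have "compact (W \<inter> sphere 0 1)"
    unfolding K_eq compact_eq_bounded_closed
    by (intro conjI closed_Int closed_INT ballI closed_Collect_eq[OF continuous_cinner continuous_on_const]
        closed_sphere bounded_Int bounded_sphere disjI2)
  moreover have "x0 /\<^sub>R norm x0 \<in> W \<inter> sphere 0 1"
  proof
    show "x0 /\<^sub>R norm x0 \<in> W"
      using x0 by (simp add: W_def scaleR_eq_of_real_smult cinner_smult_left)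
    show "x0 /\<^sub>R norm x0 \<in> sphere 0 1" using x0 by simp
  qed
  moreover have "continuous_on (W \<inter> sphere 0 1) Q"
    unfolding Q_def cinner_def by (intro continuous_intros)
  ultimately obtain v where v: "v \<in> W" "norm v = 1"
    and v_max: "\<And>y. y \<in> W \<inter> sphere 0 1 \<Longrightarrow> Q y \<le> Q v"
    using continuous_attains_sup[of "W \<inter> sphere 0 1" Q] by (metis IntE empty_iff mem_sphere_0)
  have "Q x \<le> Q v * (norm x)\<^sup>2" if "x \<in> W" for x
  proof (cases "x = 0")
    case True then show ?thesis by (simp add: Q_def)
  next
    case False
    define y where "y = x /\<^sub>R norm x"
    have "y \<in> W" using that by (simp add: y_def W_def scaleR_eq_of_real_smult cinner_smult_left)
    moreover have "norm y = 1" using False by (simp add: y_def)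
    ultimately have "Q y \<le> Q v" using v_max by simp
    moreover have "Q y = Q x / (norm x)\<^sup>2"
      by (simp add: Q_def y_def scaleR_eq_of_real_smult matrix_vector_mult_smult cinner_smult_left
          cinner_smult_right field_simps power2_eq_square)
    ultimately show ?thesis using False by (simp add: field_simps)
  qed
  with v show ?thesis unfolding W_def Q_def by (intro that) auto
qed

lemma self_adjoint_eigenvector_orthogonal:
  fixes A :: "complex^'n^'n" and f :: "nat \<Rightarrow> complex^'n"
  assumes sa: "self_adjoint A"
    and invariant: "\<And>x. \<forall>i<k. cinner x (f i) = 0 \<Longrightarrow> \<forall>i<k. cinner (A *v x) (f i) = 0"
    and x0: "x0 \<noteq> 0" "\<forall>i<k. cinner x0 (f i) = 0"
  obtains v \<mu> where "norm v = 1" "\<forall>i<k. cinner v (f i) = 0" "A *v v = complex_of_real \<mu> *s v"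
proof -
  define W where "W = {x. \<forall>i<k. cinner x (f i) = 0}"
  have W_closed: "x + c *s y \<in> W" if "x \<in> W" "y \<in> W" for x y c
    using that by (simp add: W_def cinner_add_left cinner_smult_left)
  obtain v where v: "v \<in> W" "norm v = 1"
    and v_max: "\<And>x. x \<in> W \<Longrightarrow> Re (cinner (A *v x) x) \<le> Re (cinner (A *v v) v) * (norm x)\<^sup>2"
    using exists_Rayleigh_maximiser[OF x0, of A] unfolding W_def mem_Collect_eq by metis
  define \<mu> where "\<mu> = cinner (A *v v) v"
  define u where "u = A *v v - \<mu> *s v"
  have "A *v v \<in> W" using invariant v(1) by (simp add: W_def)
  then have "u \<in> W" unfolding u_def using W_closed[OF _ v(1), of "A *v v" "- \<mu>"] by simp
  moreover have "cinner v v = 1" using v(2) by (simp add: cinner_self)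
  then have "cinner u v = 0" by (simp add: u_def \<mu>_def cinner_diff_left cinner_smult_left)
  ultimately have "cinner (A *v v) u = 0"
    using self_adjoint_maximiser_orthogonal[OF sa W_closed v v_max] by blast
  moreover have "cinner v u = 0" using \<open>cinner u v = 0\<close> cnj_cinner[of u v] by simp
  ultimately have "cinner u u = 0"
    by (subst (1) u_def) (simp add: cinner_diff_left cinner_smult_left)
  then have "A *v v = \<mu> *s v" by (simp add: u_def cinner_self)
  then have "A *v v = complex_of_real (Re \<mu>) *s v"
    using self_adjoint_cinner_real[OF sa] \<mu>_def by metis
  with v that show ?thesis by (simp add: W_def)
qed

definition orthonormal_eigenvectors ::
    "complex^'n^'n \<Rightarrow> (nat \<Rightarrow> complex^'n) \<Rightarrow> (nat \<Rightarrow> real) \<Rightarrow> nat \<Rightarrow> bool" where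
  "orthonormal_eigenvectors A f l k \<longleftrightarrow>
     (\<forall>i<k. \<forall>j<k. cinner (f i) (f j) = (if i = j then 1 else 0))
     \<and> (\<forall>i<k. A *v f i = complex_of_real (l i) *s f i)"

lemma orthonormal_eigenvectors_extend:
  fixes A :: "complex^'n^'n"
  assumes sa: "self_adjoint A" and family: "orthonormal_eigenvectors A f l k" and k: "k < CARD('n)"
  shows "\<exists>f' l'. orthonormal_eigenvectors A f' l' (Suc k)"
proof -
  have orthonormal: "\<And>i j. i < k \<Longrightarrow> j < k \<Longrightarrow> cinner (f i) (f j) = (if i = j then 1 else 0)"
    and eigen: "\<And>i. i < k \<Longrightarrow> A *v f i = complex_of_real (l i) *s f i"
    using family unfolding orthonormal_eigenvectors_def by auto
  obtain x0 where x0: "x0 \<noteq> 0" "\<forall>i<k. cinner x0 (f i) = 0"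
    using exists_orthogonal_to_orthonormal[OF orthonormal k] by blast
  have invariant: "\<forall>i<k. cinner (A *v x) (f i) = 0" if "\<forall>i<k. cinner x (f i) = 0" for x
    using that by (simp add: self_adjoint_cinner[OF sa] eigen cinner_smult_right)
  obtain v \<mu> where v: "norm v = 1" "\<forall>i<k. cinner v (f i) = 0"
    and eigen_v: "A *v v = complex_of_real \<mu> *s v"
    using self_adjoint_eigenvector_orthogonal[OF sa invariant x0] by blast
  have "cinner v v = 1" using v(1) by (simp add: cinner_self)
  moreover have "cinner (f i) v = 0" if "i < k" for i using v(2) that cnj_cinner[of v "f i"] by simp
  ultimately have "orthonormal_eigenvectors A (f(k := v)) (l(k := \<mu>)) (Suc k)"
    using orthonormal eigen eigen_v v(2) unfolding orthonormal_eigenvectors_def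
    by (auto simp: less_Suc_eq)
  then show ?thesis by blast
qed

lemma exists_orthonormal_eigenvectors:
  fixes A :: "complex^'n^'n"
  assumes "self_adjoint A" and "k \<le> CARD('n)"
  shows "\<exists>f l. orthonormal_eigenvectors A f l k"
  using assms(2)
proof (induction k)
  case 0 show ?case by (simp add: orthonormal_eigenvectors_def)
next
  case (Suc k)
  then obtain f l where "orthonormal_eigenvectors A f l k" by auto
  with Suc.prems show ?case using orthonormal_eigenvectors_extend[OF assms(1)] by auto
qed

lemma unitary_mat_mult_adjoint: "unitary_mat U \<Longrightarrow> U ** adjoint_mat U = mat 1"
  and unitary_mat_adjoint_mult: "unitary_mat U \<Longrightarrow> adjoint_mat U ** U = mat 1"
  unfolding unitary_mat_def by auto

theorem self_adjoint_spectral_decomposition: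
  fixes A :: "complex^'n^'n"
  assumes "self_adjoint A"
  obtains U l where "unitary_mat U" "A = U ** diag_mat l ** adjoint_mat U"
proof -
  obtain f l where "orthonormal_eigenvectors A f l CARD('n)"
    using exists_orthonormal_eigenvectors[OF assms order_refl] by blast
  then have orthonormal: "\<And>i j. i < CARD('n) \<Longrightarrow> j < CARD('n) \<Longrightarrow>
        cinner (f i) (f j) = (if i = j then 1 else 0)"
    and eigen: "\<And>i. i < CARD('n) \<Longrightarrow> A *v f i = complex_of_real (l i) *s f i"
    unfolding orthonormal_eigenvectors_def by auto
  obtain g :: "'n \<Rightarrow> nat" where g: "bij_betw g UNIV {0..<CARD('n)}"
    using ex_bij_betw_finite_nat[of "UNIV::'n set"] by auto
  then have g_less: "g c < CARD('n)" and g_eq_iff: "g a = g b \<longleftrightarrow> a = b" for a b c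
    by (auto simp: bij_betw_def inj_on_def)
  define U where "U = (\<chi> i c. f (g c) $ i)"
  define eig where "eig c = l (g c)" for c
  have "adjoint_mat U ** U = mat 1"
  proof -
    have "(adjoint_mat U ** U) $ a $ b = cinner (f (g b)) (f (g a))" for a b
      unfolding U_def cinner_def matrix_matrix_mult_def by (simp add: mult.commute)
    then show ?thesis
      using orthonormal[OF g_less g_less] g_eq_iff by (simp add: vec_eq_iff mat_def)
  qed
  moreover from this have "U ** adjoint_mat U = mat 1" using matrix_left_right_inverse by blast
  moreover have "A ** U = U ** diag_mat eig"
  proof -
    have "(A ** U) $ i $ c = (A *v f (g c)) $ i" for i c
      unfolding U_def matrix_matrix_mult_def matrix_vector_mult_def by simp
    also have "\<dots> i c = complex_of_real (eig c) * f (g c) $ i" for i c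
      using eigen[OF g_less] unfolding eig_def by simp
    also have "\<dots> i c = (U ** diag_mat eig) $ i $ c" for i c
      unfolding U_def matrix_matrix_mult_def diag_mat_def
      by (simp add: if_distrib if_distribR mult.commute cong: if_cong)
    finally show ?thesis by (simp add: vec_eq_iff)
  qed
  then have "A ** (U ** adjoint_mat U) = U ** diag_mat eig ** adjoint_mat U"
    by (simp add: matrix_mul_assoc)
  ultimately show ?thesis using that unfolding unitary_mat_def by simp
qed

section \<open>Functional calculus\<close>

lemma matrix_mult_diag_mat_nth: "(A ** diag_mat d) $ a $ b = A $ a $ b * complex_of_real (d b)"
  unfolding matrix_matrix_mult_def diag_mat_def
  by (simp add: if_distrib if_distribR cong: if_cong)

lemma diag_mat_mult_nth: "(diag_mat d ** A) $ a $ b = complex_of_real (d a) * A $ a $ b"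
  unfolding matrix_matrix_mult_def diag_mat_def
  by (simp add: if_distrib if_distribR cong: if_cong)

lemma diag_mat_mult_diag_mat: "diag_mat d ** diag_mat e = diag_mat (\<lambda>k. d k * e k)"
  by (simp add: vec_eq_iff diag_mat_mult_nth) (simp add: diag_mat_def)

lemma unitary_conj_diag_mat_nth:
  "(U ** diag_mat d ** adjoint_mat U) $ i $ j = (\<Sum>k\<in>UNIV. U$i$k * complex_of_real (d k) * cnj (U$j$k))"
  by (simp add: matrix_matrix_mult_def[of "U ** diag_mat d" "adjoint_mat U"] matrix_mult_diag_mat_nth)

lemma self_adjoint_unitary_conj_diag_mat: "self_adjoint (U ** diag_mat d ** adjoint_mat U)"
proof -
  have "adjoint_mat (diag_mat d) = diag_mat d" by (simp add: vec_eq_iff diag_mat_def)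
  then show ?thesis unfolding self_adjoint_def by (simp add: adjoint_mat_mult matrix_mul_assoc)
qed

text \<open>
  The matrix \<open>W = V\<^sup>* U\<close> relating two spectral decompositions satisfies \<open>W diag l = diag m W\<close>, so
  \<open>W$a$b \<noteq> 0\<close> forces \<open>l b = m a\<close>; hence also \<open>W diag (g \<circ> l) = diag (g \<circ> m) W\<close>.
\<close>
lemma unitary_conj_diag_mat_comp_eq:
  fixes U V :: "complex^'n^'n"
  assumes U: "unitary_mat U" and V: "unitary_mat V"
    and eq: "U ** diag_mat l ** adjoint_mat U = V ** diag_mat m ** adjoint_mat V"
  shows "U ** diag_mat (g \<circ> l) ** adjoint_mat U = V ** diag_mat (g \<circ> m) ** adjoint_mat V"
proof -
  note U_inv = unitary_mat_adjoint_mult[OF U] unitary_mat_mult_adjoint[OF U]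
  note V_inv = unitary_mat_adjoint_mult[OF V] unitary_mat_mult_adjoint[OF V]
  define W where "W = adjoint_mat V ** U"
  have "W ** diag_mat l = adjoint_mat V ** (U ** diag_mat l ** adjoint_mat U) ** U"
    unfolding W_def by (simp add: matrix_mul_assoc[symmetric] U_inv)
  also have "\<dots> = diag_mat m ** W"
    unfolding eq W_def by (simp add: matrix_mul_assoc V_inv)
  finally have intertwine: "W ** diag_mat l = diag_mat m ** W" .
  have "W $ a $ b * complex_of_real (g (l b)) = complex_of_real (g (m a)) * W $ a $ b" for a b
  proof (cases "W $ a $ b = 0")
    case False
    have "W $ a $ b * complex_of_real (l b) = complex_of_real (m a) * W $ a $ b"
      using intertwine by (metis diag_mat_mult_nth matrix_mult_diag_mat_nth)
    with False have "l b = m a" by (simp add: mult.commute)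
    then show ?thesis by (simp add: mult.commute)
  qed simp
  then have "W ** diag_mat (g \<circ> l) = diag_mat (g \<circ> m) ** W"
    by (simp add: vec_eq_iff diag_mat_mult_nth matrix_mult_diag_mat_nth)
  moreover have "W ** adjoint_mat U = adjoint_mat V"
    unfolding W_def by (simp add: matrix_mul_assoc[symmetric] U_inv)
  moreover have "V ** W = U"
    unfolding W_def by (simp add: matrix_mul_assoc V_inv)
  ultimately have "V ** diag_mat (g \<circ> m) ** adjoint_mat V = V ** (W ** diag_mat (g \<circ> l)) ** adjoint_mat U"
    by (metis matrix_mul_assoc)
  also have "\<dots> = U ** diag_mat (g \<circ> l) ** adjoint_mat U"
    by (simp add: matrix_mul_assoc \<open>V ** W = U\<close>)
  finally show ?thesis by simp
qed

lemma matfun_spectral: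
  assumes U: "unitary_mat U" and A: "A = U ** diag_mat l ** adjoint_mat U"
  shows "matfun g A = U ** diag_mat (g \<circ> l) ** adjoint_mat U"
proof -
  let ?P = "\<lambda>B. \<exists>U l. unitary_mat U \<and> A = U ** diag_mat l ** adjoint_mat U
                        \<and> B = U ** diag_mat (g \<circ> l) ** adjoint_mat U"
  have "?P (matfun g A)"
    unfolding matfun_def by (rule someI[of ?P]) (use U A in blast)
  then obtain U' l' where U': "unitary_mat U'" "A = U' ** diag_mat l' ** adjoint_mat U'"
     and B: "matfun g A = U' ** diag_mat (g \<circ> l') ** adjoint_mat U'" by blast
  show ?thesis unfolding B by (rule unitary_conj_diag_mat_comp_eq[OF U'(1) U]) (use U' A in simp)
qed

lemma matfun_nth:
  assumes "unitary_mat U" and "A = U ** diag_mat l ** adjoint_mat U"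
  shows "matfun g A $ i $ j = (\<Sum>k\<in>UNIV. U$i$k * complex_of_real (g (l k)) * cnj (U$j$k))"
  by (simp add: matfun_spectral[OF assms] unitary_conj_diag_mat_nth)

lemma self_adjoint_matfun: "self_adjoint A \<Longrightarrow> self_adjoint (matfun g A)"
  by (metis self_adjoint_spectral_decomposition matfun_spectral self_adjoint_unitary_conj_diag_mat)

lemma matfun_add:
  assumes "self_adjoint A"
  shows "matfun (\<lambda>x. f x + g x) A = matfun f A + matfun g A"
proof -
  obtain U l where U: "unitary_mat U" "A = U ** diag_mat l ** adjoint_mat U"
    using self_adjoint_spectral_decomposition[OF assms] .
  show ?thesis by (simp add: vec_eq_iff matfun_nth[OF U] algebra_simps sum.distrib)
qed

lemma matfun_mult:
  assumes "self_adjoint A"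
  shows "matfun (\<lambda>x. f x * g x) A = matfun f A ** matfun g A"
proof -
  obtain U l where U: "unitary_mat U" "A = U ** diag_mat l ** adjoint_mat U"
    using self_adjoint_spectral_decomposition[OF assms] .
  have "matfun f A ** matfun g A
      = U ** diag_mat (f \<circ> l) ** (adjoint_mat U ** U) ** diag_mat (g \<circ> l) ** adjoint_mat U"
    by (simp add: matfun_spectral[OF U] matrix_mul_assoc)
  also have "\<dots> = U ** (diag_mat (f \<circ> l) ** diag_mat (g \<circ> l)) ** adjoint_mat U"
    by (simp add: unitary_mat_adjoint_mult[OF U(1)] matrix_mul_assoc)
  finally show ?thesis by (simp add: diag_mat_mult_diag_mat matfun_spectral[OF U] o_def)
qed

lemma matfun_const_nth:
  assumes "self_adjoint A"
  shows "matfun (\<lambda>x. c) A $ i $ j = (if i = j then complex_of_real c else 0)"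
proof -
  obtain U l where U: "unitary_mat U" "A = U ** diag_mat l ** adjoint_mat U"
    using self_adjoint_spectral_decomposition[OF assms] .
  have "(\<Sum>k\<in>UNIV. U$i$k * cnj (U$j$k)) = (if i = j then 1 else 0)"
    using unitary_mat_mult_adjoint[OF U(1)] by (simp add: vec_eq_iff matrix_matrix_mult_def mat_def)
  then show ?thesis
    by (simp add: matfun_nth[OF U] mult.commute mult.left_commute flip: sum_distrib_left)
qed

lemma matfun_id:
  assumes "self_adjoint A"
  shows "matfun (\<lambda>x. x) A = A"
proof -
  obtain U l where U: "unitary_mat U" "A = U ** diag_mat l ** adjoint_mat U"
    using self_adjoint_spectral_decomposition[OF assms] .
  show ?thesis using matfun_spectral[OF U, of "\<lambda>x. x"] U(2) by (simp add: o_def)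
qed

lemma tendsto_matfun_nth:
  assumes "self_adjoint A" and "\<And>x. (\<lambda>n. f n x) \<longlonglongrightarrow> g x"
  shows "(\<lambda>n. matfun (f n) A $ i $ j) \<longlonglongrightarrow> matfun g A $ i $ j"
proof -
  obtain U l where U: "unitary_mat U" "A = U ** diag_mat l ** adjoint_mat U"
    using self_adjoint_spectral_decomposition[OF assms(1)] .
  show ?thesis unfolding matfun_nth[OF U] by (intro tendsto_intros assms(2))
qed

lemma norm_unitary_mat_nth_le:
  assumes "unitary_mat U"
  shows "cmod (U$a$k) \<le> 1"
proof -
  have "(\<Sum>k\<in>UNIV. U$a$k * cnj (U$a$k)) = 1"
    using unitary_mat_mult_adjoint[OF assms] by (simp add: vec_eq_iff matrix_matrix_mult_def mat_def)
  then have "complex_of_real (\<Sum>k\<in>UNIV. (cmod (U$a$k))\<^sup>2) = 1"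
    by (simp add: complex_norm_square[symmetric] del: of_real_power)
  then have "(\<Sum>k\<in>UNIV. (cmod (U$a$k))\<^sup>2) = 1"
    by (simp only: of_real_eq_1_iff)
  moreover have "(cmod (U$a$k))\<^sup>2 \<le> (\<Sum>k\<in>UNIV. (cmod (U$a$k))\<^sup>2)" by (rule member_le_sum) auto
  ultimately have "(cmod (U$a$k))\<^sup>2 \<le> 1\<^sup>2" by simp
  then show ?thesis by (rule power2_le_imp_le) simp
qed

text \<open>The eigenvalues of \<open>A\<close> are the diagonal entries of \<open>U\<^sup>* A U\<close>.\<close>
lemma abs_eigenvalue_le:
  fixes A :: "complex^'n^'n"
  assumes U: "unitary_mat U" and A: "A = U ** diag_mat l ** adjoint_mat U"
  shows "\<bar>l k\<bar> \<le> (\<Sum>a\<in>UNIV. \<Sum>b\<in>UNIV. cmod (A$a$b))"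
proof -
  have "adjoint_mat U ** A ** U = diag_mat l"
    using A by (simp add: matrix_mul_assoc unitary_mat_adjoint_mult[OF U])
      (simp add: matrix_mul_assoc[symmetric] unitary_mat_adjoint_mult[OF U])
  then have "complex_of_real (l k) = (\<Sum>b\<in>UNIV. \<Sum>a\<in>UNIV. cnj (U$a$k) * A$a$b * U$b$k)"
    by (simp add: vec_eq_iff diag_mat_def matrix_matrix_mult_def sum_distrib_right)
  then have "\<bar>l k\<bar> = cmod (\<Sum>b\<in>UNIV. \<Sum>a\<in>UNIV. cnj (U$a$k) * A$a$b * U$b$k)"
    by (metis norm_of_real)
  also have "\<dots> \<le> (\<Sum>b\<in>UNIV. \<Sum>a\<in>UNIV. cmod (cnj (U$a$k) * A$a$b * U$b$k))"
    by (rule order_trans[OF norm_sum sum_mono[OF norm_sum]])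
  also have "\<dots> \<le> (\<Sum>a\<in>UNIV. \<Sum>b\<in>UNIV. cmod (A$a$b))"
    unfolding norm_mult complex_mod_cnj
  proof (subst sum.swap, intro sum_mono)
    fix a b
    have "cmod (U$a$k) * cmod (A$a$b) * cmod (U$b$k) \<le> 1 * cmod (A$a$b) * 1"
      using norm_unitary_mat_nth_le[OF U] by (intro mult_mono) auto
    then show "cmod (U$a$k) * cmod (A$a$b) * cmod (U$b$k) \<le> cmod (A$a$b)" by simp
  qed
  finally show ?thesis .
qed

lemma norm_matfun_nth_le:
  fixes A :: "complex^'n^'n"
  assumes "self_adjoint A" and g: "\<And>x. \<bar>g x\<bar> \<le> 1 + x\<^sup>2"
  shows "cmod (matfun g A $ i $ j) \<le> real CARD('n) * (1 + (\<Sum>a\<in>UNIV. \<Sum>b\<in>UNIV. cmod (A$a$b))\<^sup>2)"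
proof -
  obtain U l where U: "unitary_mat U" "A = U ** diag_mat l ** adjoint_mat U"
    using self_adjoint_spectral_decomposition[OF assms(1)] .
  define c where "c = (\<Sum>a\<in>UNIV. \<Sum>b\<in>UNIV. cmod (A$a$b))"
  have "cmod (matfun g A $ i $ j) \<le> (\<Sum>k\<in>UNIV. cmod (U$i$k * complex_of_real (g (l k)) * cnj (U$j$k)))"
    unfolding matfun_nth[OF U] by (rule norm_sum)
  also have "\<dots> \<le> (\<Sum>k\<in>(UNIV::'n set). 1 + c\<^sup>2)"
  proof (rule sum_mono)
    fix k
    have "\<bar>g (l k)\<bar> \<le> 1 + c\<^sup>2"
      using g[of "l k"] power_mono[OF abs_eigenvalue_le[OF U, of k] abs_ge_zero, of 2] by (simp add: c_def)
    then have "cmod (U$i$k) * \<bar>g (l k)\<bar> * cmod (U$j$k) \<le> 1 * (1 + c\<^sup>2) * 1"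
      using norm_unitary_mat_nth_le[OF U(1)] by (intro mult_mono) auto
    then show "cmod (U$i$k * complex_of_real (g (l k)) * cnj (U$j$k)) \<le> 1 + c\<^sup>2"
      by (simp add: norm_mult)
  qed
  finally show ?thesis by (simp add: c_def)
qed

section \<open>Measurability of the functional calculus\<close>

lemma continuous_pointwise_limit_of_polynomials:
  fixes g :: "real \<Rightarrow> real"
  assumes "continuous_on UNIV g"
  obtains P where "\<And>n. real_polynomial_function (P n)" and "\<And>x. (\<lambda>n. P n x) \<longlonglongrightarrow> g x"
proof -
  have "\<exists>p. real_polynomial_function p \<and>
      (\<forall>x\<in>{-real n..real n}. \<bar>g x - p x\<bar> < inverse (real (Suc n)))" for n
  proof -
    have "0 < inverse (real (Suc n))" by simp
    from Stone_Weierstrass_real_polynomial_function[OF compact_Icc[of "-real n" "real n"]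
          continuous_on_subset[OF assms subset_UNIV] this]
    obtain p where "real_polynomial_function p"
      "\<And>x. x \<in> {-real n..real n} \<Longrightarrow> \<bar>g x - p x\<bar> < inverse (real (Suc n))"
      by blast
    then show ?thesis by blast
  qed
  then obtain P where P: "\<forall>n. real_polynomial_function (P n) \<and>
      (\<forall>x\<in>{-real n..real n}. \<bar>g x - P n x\<bar> < inverse (real (Suc n)))"
    by (metis choice)
  then have P_poly: "\<And>n. real_polynomial_function (P n)"
    and P_close: "\<And>n x. x \<in> {-real n..real n} \<Longrightarrow> \<bar>g x - P n x\<bar> < inverse (real (Suc n))"
    by blast+
  have "(\<lambda>n. P n x) \<longlonglongrightarrow> g x" for x
  proof (rule LIM_zero_cancel)
    have "\<forall>\<^sub>F n in sequentially. norm (P n x - g x) \<le> inverse (real (Suc n))"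
      using eventually_ge_at_top[of "nat \<lceil>\<bar>x\<bar>\<rceil>"]
    proof eventually_elim
      case (elim n)
      then have "\<bar>x\<bar> \<le> real n"
        using real_nat_ceiling_ge[of "\<bar>x\<bar>"] of_nat_le_iff order_trans by blast
      then have "x \<in> {-real n..real n}" by auto
      from P_close[OF this] show ?case by simp
    qed
    then show "(\<lambda>n. P n x - g x) \<longlonglongrightarrow> 0"
      by (rule Lim_null_comparison) (rule LIMSEQ_inverse_real_of_nat)
  qed
  with P_poly show ?thesis by (rule that)
qed

text \<open>
  The class of \<open>g\<close> for which \<open>\<omega> \<mapsto> g(Z \<omega>)\<close> is measurable contains the polynomials and is closed
  under pointwise limits, hence contains all Borel functions.
\<close>
definition matfun_measurable :: "'a measure \<Rightarrow> ('a \<Rightarrow> complex^'n^'n) \<Rightarrow> (real \<Rightarrow> real) \<Rightarrow> bool" where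
  "matfun_measurable M Z g \<longleftrightarrow> (\<forall>i j. (\<lambda>w. matfun g (Z w) $ i $ j) \<in> borel_measurable M)"

context
  fixes M :: "'a measure" and Z :: "'a \<Rightarrow> complex^'n^'n"
  assumes self_adjoint: "\<And>w. w \<in> space M \<Longrightarrow> self_adjoint (Z w)"
    and measurable: "\<And>i j. (\<lambda>w. Z w $ i $ j) \<in> borel_measurable M"
begin

lemma matfun_measurable_id: "matfun_measurable M Z (\<lambda>x. x)"
  unfolding matfun_measurable_def
  by (auto simp: matfun_id[OF self_adjoint] measurable cong: measurable_cong)

lemma matfun_measurable_const: "matfun_measurable M Z (\<lambda>x. c)"
  unfolding matfun_measurable_def
  by (auto simp: matfun_const_nth[OF self_adjoint] cong: measurable_cong)

lemma matfun_measurable_add: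
  "matfun_measurable M Z f \<Longrightarrow> matfun_measurable M Z g \<Longrightarrow> matfun_measurable M Z (\<lambda>x. f x + g x)"
  unfolding matfun_measurable_def
  by (auto simp: matfun_add[OF self_adjoint] cong: measurable_cong intro!: borel_measurable_add)

lemma matfun_measurable_mult:
  "matfun_measurable M Z f \<Longrightarrow> matfun_measurable M Z g \<Longrightarrow> matfun_measurable M Z (\<lambda>x. f x * g x)"
  unfolding matfun_measurable_def
  by (auto simp: matfun_mult[OF self_adjoint] matrix_matrix_mult_def cong: measurable_cong
      intro!: borel_measurable_sum borel_measurable_times)

lemma matfun_measurable_lim:
  assumes "\<And>n. matfun_measurable M Z (f n)" and "\<And>x. (\<lambda>n. f n x) \<longlonglongrightarrow> g x"
  shows "matfun_measurable M Z g"
  unfolding matfun_measurable_def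
proof (intro allI)
  fix i j
  show "(\<lambda>w. matfun g (Z w) $ i $ j) \<in> borel_measurable M"
    by (rule borel_measurable_LIMSEQ_metric[of "\<lambda>n w. matfun (f n) (Z w) $ i $ j"])
       (use assms in \<open>auto simp: matfun_measurable_def intro: tendsto_matfun_nth[OF self_adjoint]\<close>)
qed

lemma matfun_measurable_sum:
  "finite S \<Longrightarrow> (\<And>y. y \<in> S \<Longrightarrow> matfun_measurable M Z (G y))
    \<Longrightarrow> matfun_measurable M Z (\<lambda>x. \<Sum>y\<in>S. G y x)"
proof (induction S rule: finite_induct)
  case empty
  show ?case using matfun_measurable_const[of 0] by simp
next
  case (insert a S)
  then show ?case using matfun_measurable_add[of "G a" "\<lambda>x. \<Sum>y\<in>S. G y x"] by simp
qed

lemma matfun_measurable_poly: "real_polynomial_function p \<Longrightarrow> matfun_measurable M Z p"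
proof (induction rule: real_polynomial_function.induct)
  case (linear f)
  then obtain c where "f = (\<lambda>x. x * c)" by (auto simp: real_bounded_linear)
  thus ?case using matfun_measurable_mult[OF matfun_measurable_id matfun_measurable_const] by simp
next
  case (const c) show ?case by (rule matfun_measurable_const)
next
  case (add f g) from add.IH show ?case by (rule matfun_measurable_add)
next
  case (mult f g) from mult.IH show ?case by (rule matfun_measurable_mult)
qed

lemma matfun_measurable_continuous:
  assumes "continuous_on UNIV g"
  shows "matfun_measurable M Z g"
proof -
  obtain P where P: "\<And>n. real_polynomial_function (P n)" and lim: "\<And>x. (\<lambda>n. P n x) \<longlonglongrightarrow> g x"
    using continuous_pointwise_limit_of_polynomials[OF assms] by blast
  show ?thesis by (rule matfun_measurable_lim[OF matfun_measurable_poly[OF P] lim])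
qed

lemma matfun_measurable_indicator_atMost: "matfun_measurable M Z (indicator {..a})"
proof -
  define h where "h n x = max 0 (min 1 (1 - real n * (x - a)))" for n :: nat and x
  have "continuous_on UNIV (h n)" for n unfolding h_def by (intro continuous_intros)
  hence "matfun_measurable M Z (h n)" for n by (rule matfun_measurable_continuous)
  moreover have "(\<lambda>n. h n x) \<longlonglongrightarrow> indicator {..a} x" for x
  proof (cases "x \<le> a")
    case True
    hence "h n x = 1" for n unfolding h_def using mult_nonneg_nonpos[of "real n" "x - a"] by auto
    thus ?thesis using True by simp
  next
    case False
    define N where "N = nat \<lceil>1/(x - a)\<rceil>"
    have "h n x = 0" if "N \<le> n" for n
    proof -
      have "real n \<ge> 1/(x-a)" using that unfolding N_def by linarith
      hence "real n * (x - a) \<ge> 1" using False by (simp add: field_simps)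
      thus ?thesis unfolding h_def by simp
    qed
    hence "eventually (\<lambda>n. h n x = 0) sequentially" unfolding eventually_sequentially by blast
    thus ?thesis using False by (simp add: tendsto_eventually)
  qed
  ultimately show ?thesis by (rule matfun_measurable_lim)
qed

lemma matfun_measurable_indicator:
  assumes "B \<in> sets borel"
  shows "matfun_measurable M Z (indicator B)"
proof -
  have "B \<in> sigma_sets UNIV (range (\<lambda>a::real. {..a}))"
    using assms by (simp add: borel_eq_atMost sets_measure_of)
  then show ?thesis
  proof (induction rule: sigma_sets.induct)
    case (Basic a)
    then show ?case using matfun_measurable_indicator_atMost by auto
  next
    case Empty
    then show ?case using matfun_measurable_const[of 0] by simp
  next
    case (Compl a)
    have "(indicator (UNIV - a) :: real \<Rightarrow> real) = (\<lambda>x. 1 + (-1) * indicator a x)"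
      by (auto simp: indicator_def fun_eq_iff)
    then show ?case
      by (simp only:) (rule matfun_measurable_add[OF matfun_measurable_const
          matfun_measurable_mult[OF matfun_measurable_const Compl.IH]])
  next
    case (Union a)
    have "matfun_measurable M Z (indicator (\<Union>i<k. a i))" for k
    proof (induction k)
      case 0
      then show ?case using matfun_measurable_const[of 0] by simp
    next
      case (Suc k)
      let ?I = "indicator (\<Union>i<k. a i) :: real \<Rightarrow> real"
      have "(indicator (\<Union>i<Suc k. a i) :: real \<Rightarrow> real) =
          (\<lambda>x. ?I x + indicator (a k) x + (-1) * (?I x * indicator (a k) x))"
        by (auto simp: indicator_def fun_eq_iff lessThan_Suc)
      then show ?case
        by (simp only:) (rule matfun_measurable_add[OF matfun_measurable_add[OF Suc.IH Union.IH]
            matfun_measurable_mult[OF matfun_measurable_const matfun_measurable_mult[OF Suc.IH Union.IH]]])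
    qed
    then show ?case by (rule matfun_measurable_lim[OF _ LIMSEQ_indicator_UN])
  qed
qed

lemma borel_measurable_matfun_nth:
  assumes "g \<in> borel_measurable borel"
  shows "(\<lambda>w. matfun g (Z w) $ i $ j) \<in> borel_measurable M"
proof -
  obtain F where F: "\<And>n. simple_function borel (F n)" and lim: "\<And>x. (\<lambda>n. F n x) \<longlonglongrightarrow> g x"
    using borel_measurable_implies_sequence_metric[OF assms, of 0] by auto
  have "matfun_measurable M Z (F n)" for n
  proof -
    have finite: "finite (range (F n))" and sets: "\<And>y. y \<in> range (F n) \<Longrightarrow> F n -` {y} \<in> sets borel"
      using F[of n] unfolding simple_function_def by auto
    have F_eq: "F n = (\<lambda>x. \<Sum>y\<in>range (F n). indicator (F n -` {y}) x * y)"
      by (rule ext, subst simple_function_indicator_representation_banach[OF F[of n]])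
        (simp_all add: mult.commute)
    show ?thesis
      by (subst F_eq, intro matfun_measurable_sum finite matfun_measurable_mult matfun_measurable_const
          matfun_measurable_indicator sets)
  qed
  then have "matfun_measurable M Z g" by (rule matfun_measurable_lim[OF _ lim])
  then show ?thesis unfolding matfun_measurable_def by blast
qed

end

section \<open>Quadratic forms and the operator norm\<close>

definition quadform :: "complex^'n^'n \<Rightarrow> complex^'n \<Rightarrow> complex" where
  "quadform A v = cinner (A *v v) v"

lemma quadform_eq_sum: "quadform A v = (\<Sum>i\<in>UNIV. \<Sum>j\<in>UNIV. A$i$j * (v$j * cnj (v$i)))"
  unfolding quadform_def cinner_def matrix_vector_mult_def
  by (simp add: sum_distrib_right sum_distrib_left mult_ac)

lemma unitary_mat_norm_preserving:
  assumes "unitary_mat U"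
  shows "norm (U *v x) = norm x" and "norm (adjoint_mat U *v x) = norm x"
proof -
  have "cinner (U *v x) (U *v x) = cinner x x" "cinner (adjoint_mat U *v x) (adjoint_mat U *v x) = cinner x x"
    by (simp_all add: cinner_matrix_vector_mult matrix_vector_mul_assoc
        unitary_mat_adjoint_mult[OF assms] unitary_mat_mult_adjoint[OF assms])
  then show "norm (U *v x) = norm x" and "norm (adjoint_mat U *v x) = norm x"
    unfolding cinner_self by (simp_all del: of_real_power add: power2_eq_iff_nonneg)
qed

lemma quadform_unitary_conj_diag_mat:
  "quadform (U ** diag_mat d ** adjoint_mat U) v
     = (\<Sum>k\<in>UNIV. complex_of_real (d k * (cmod ((adjoint_mat U *v v) $ k))\<^sup>2))"
proof -
  define y where "y = adjoint_mat U *v v"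
  have "(U ** diag_mat d ** adjoint_mat U) *v v = U *v (diag_mat d *v y)"
    by (simp add: y_def matrix_vector_mul_assoc matrix_mul_assoc)
  then have "quadform (U ** diag_mat d ** adjoint_mat U) v = cinner (diag_mat d *v y) y"
    by (simp add: quadform_def y_def cinner_matrix_vector_mult)
  also have "\<dots> = (\<Sum>k\<in>UNIV. complex_of_real (d k) * (y$k * cnj (y$k)))"
    unfolding diag_mat_def matrix_vector_mult_def cinner_def
    by (simp add: if_distrib if_distribR mult.assoc cong: if_cong)
  finally show ?thesis
    by (simp add: y_def complex_norm_square[symmetric] del: of_real_power)
qed

lemma norm_matrix_vector_le_opnorm: "norm (A *v v) \<le> opnorm A * norm v"
  for A :: "complex^'n^'n"
  unfolding opnorm_def by (rule onorm) simp

lemma opnorm_scaleR: "opnorm (r *\<^sub>R A) = \<bar>r\<bar> * opnorm A"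
  for A :: "complex^'n^'n"
proof -
  have "(\<lambda>v. (r *\<^sub>R A) *v v) = (\<lambda>v. r *\<^sub>R (A *v v))"
    by (simp add: fun_eq_iff vec_eq_iff matrix_vector_mult_def scaleR_sum_right)
  moreover have "bounded_linear (\<lambda>v::complex^'n. A *v v)" by simp
  ultimately show ?thesis
    unfolding opnorm_def by (simp add: onorm_scaleR)
qed

lemma Re_quadform_le_opnorm: "Re (quadform A v) \<le> opnorm A * (norm v)\<^sup>2"
proof -
  have "Re (quadform A v) \<le> norm (A *v v) * norm v"
    unfolding quadform_def using complex_Re_le_cmod norm_cinner_le order_trans by blast
  also have "\<dots> \<le> opnorm A * norm v * norm v"
    by (rule mult_right_mono[OF norm_matrix_vector_le_opnorm]) simp
  finally show ?thesis by (simp add: power2_eq_square mult_ac)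
qed

lemma norm_diag_mat_mult_le:
  assumes "\<And>k. \<bar>d k\<bar> \<le> b"
  shows "norm (diag_mat d *v y) \<le> b * norm y"
proof -
  have "0 \<le> b" using assms[of undefined] by linarith
  have "(norm (diag_mat d *v y))\<^sup>2 = (\<Sum>k\<in>UNIV. (d k)\<^sup>2 * (cmod (y$k))\<^sup>2)"
    unfolding norm_vec_def L2_set_def diag_mat_def matrix_vector_mult_def
    by (simp add: sum_nonneg if_distrib if_distribR norm_mult power_mult_distrib cong: if_cong)
  also have "\<dots> \<le> (\<Sum>k\<in>UNIV. b\<^sup>2 * (cmod (y$k))\<^sup>2)"
  proof (intro sum_mono mult_right_mono)
    show "(d k)\<^sup>2 \<le> b\<^sup>2" for k using power_mono[OF assms[of k] abs_ge_zero, of 2] by simp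
  qed simp
  also have "\<dots> = (b * norm y)\<^sup>2"
    by (simp add: norm_vec_def L2_set_def sum_nonneg sum_distrib_left power_mult_distrib)
  finally show ?thesis by (rule power2_le_imp_le) (simp add: \<open>0 \<le> b\<close>)
qed

lemma opnorm_le_if_abs_Re_quadform_le:
  fixes H :: "complex^'n^'n"
  assumes "self_adjoint H" and bound: "\<And>v. \<bar>Re (quadform H v)\<bar> \<le> b * (norm v)\<^sup>2"
  shows "opnorm H \<le> b"
proof -
  obtain U h where U: "unitary_mat U" and H: "H = U ** diag_mat h ** adjoint_mat U"
    using self_adjoint_spectral_decomposition[OF assms(1)] .
  have "\<bar>h k\<bar> \<le> b" for k
  proof -
    define u where "u = U *v axis k 1"
    have "adjoint_mat U *v u = axis k 1"
      by (simp add: u_def matrix_vector_mul_assoc unitary_mat_adjoint_mult[OF U])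
    then have "quadform H u = complex_of_real (h k)"
      unfolding H quadform_unitary_conj_diag_mat by (simp add: axis_def if_distrib if_distribR cong: if_cong)
    moreover have "norm u = 1" by (simp add: u_def unitary_mat_norm_preserving[OF U])
    ultimately show ?thesis using bound[of u] by simp
  qed
  then have "norm (H *v v) \<le> b * norm v" for v
    using norm_diag_mat_mult_le[of h b "adjoint_mat U *v v"]
    by (simp add: H matrix_vector_mul_assoc[symmetric] unitary_mat_norm_preserving[OF U])
  then show ?thesis unfolding opnorm_def by (rule onorm_le)
qed

lemma opnorm_le_if_Re_quadform_le:
  fixes H G :: "complex^'n^'n"
  assumes "self_adjoint H" and "0 \<le> c" and "\<And>v. \<bar>Re (quadform H v)\<bar> \<le> c * Re (quadform G v)"
  shows "opnorm H \<le> c * opnorm G"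
proof (rule opnorm_le_if_abs_Re_quadform_le[OF assms(1)])
  fix v
  show "\<bar>Re (quadform H v)\<bar> \<le> c * opnorm G * (norm v)\<^sup>2"
    using assms(3)[of v] mult_left_mono[OF Re_quadform_le_opnorm[of G v] assms(2)]
    by (simp add: mult.assoc)
qed

section \<open>The bounds on \<open>\<psi>\<close> and their matrix version\<close>

lemma abs_diff_le_half_square_if_ln_bounds:
  fixes x y :: real
  assumes lower: "- ln (1 - x + x\<^sup>2/2) \<le> y" and upper: "y \<le> ln (1 + x + x\<^sup>2/2)"
  shows "\<bar>y - x\<bar> \<le> x\<^sup>2/2"
proof -
  have pos: "0 < 1 + s + s\<^sup>2/2" for s :: real
    using zero_le_power2[of "s + 1"] by (simp add: power2_eq_square algebra_simps)
  have "ln (1 + x + x\<^sup>2/2) \<le> x + x\<^sup>2/2" and "ln (1 - x + x\<^sup>2/2) \<le> x\<^sup>2/2 - x"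
    using ln_le_minus_one[OF pos[of x]] ln_le_minus_one[OF pos[of "-x"]] by simp_all
  then show ?thesis
    using lower upper unfolding abs_diff_le_iff by linarith
qed

lemma abs_Re_quadform_matfun_diff_le:
  fixes A :: "complex^'n^'n"
  assumes "self_adjoint A" and g: "\<And>x. \<bar>g x - x\<bar> \<le> x\<^sup>2/2"
  shows "\<bar>Re (quadform (matfun g A - A) v)\<bar> \<le> 1/2 * Re (quadform (A ** A) v)"
proof -
  obtain U l where U: "unitary_mat U" "A = U ** diag_mat l ** adjoint_mat U"
    using self_adjoint_spectral_decomposition[OF assms(1)] .
  define y where "y k = (cmod ((adjoint_mat U *v v) $ k))\<^sup>2" for k
  have "matfun g A - A = U ** diag_mat (g \<circ> l) ** adjoint_mat U - U ** diag_mat l ** adjoint_mat U"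
    by (simp add: matfun_spectral[OF U] U(2)[symmetric])
  also have "\<dots> = U ** diag_mat (\<lambda>k. g (l k) - l k) ** adjoint_mat U"
    by (simp add: vec_eq_iff unitary_conj_diag_mat_nth algebra_simps sum_subtractf)
  finally have diff: "Re (quadform (matfun g A - A) v) = (\<Sum>k\<in>UNIV. (g (l k) - l k) * y k)"
    by (simp add: quadform_unitary_conj_diag_mat y_def Re_sum)
  have "A ** A = U ** diag_mat l ** (adjoint_mat U ** U) ** diag_mat l ** adjoint_mat U"
    using U(2) by (simp add: matrix_mul_assoc)
  also have "\<dots> = U ** (diag_mat l ** diag_mat l) ** adjoint_mat U"
    by (simp add: unitary_mat_adjoint_mult[OF U(1)] matrix_mul_assoc)
  also have "\<dots> = U ** diag_mat (\<lambda>k. (l k)\<^sup>2) ** adjoint_mat U"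
    by (simp add: diag_mat_mult_diag_mat power2_eq_square)
  finally have square: "Re (quadform (A ** A) v) = (\<Sum>k\<in>UNIV. (l k)\<^sup>2 * y k)"
    by (simp add: quadform_unitary_conj_diag_mat y_def Re_sum)
  have "\<bar>\<Sum>k\<in>UNIV. (g (l k) - l k) * y k\<bar> \<le> (\<Sum>k\<in>UNIV. \<bar>g (l k) - l k\<bar> * y k)"
    using sum_abs[of "\<lambda>k. (g (l k) - l k) * y k" UNIV] by (simp add: abs_mult y_def)
  also have "\<dots> \<le> (\<Sum>k\<in>UNIV. (l k)\<^sup>2/2 * y k)"
    using g by (intro sum_mono mult_right_mono) (auto simp: y_def)
  finally show ?thesis by (simp add: diff square sum_divide_distrib)
qed

section \<open>Entrywise expectations\<close>

lemma mat_expect_diff: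
  assumes "\<And>i j. integrable M (\<lambda>w. F w $ i $ j)" and "\<And>i j. integrable M (\<lambda>w. G w $ i $ j)"
  shows "mat_expect M (\<lambda>w. F w - G w) = mat_expect M F - mat_expect M G"
  using assms by (simp add: mat_expect_def vec_eq_iff)

lemma mat_expect_scaleR: "mat_expect M (\<lambda>w. r *\<^sub>R F w) = r *\<^sub>R mat_expect M F"
  by (simp add: mat_expect_def vec_eq_iff scaleR_conv_of_real[where 'a=complex])

lemma (in prob_space) mat_expect_const: "mat_expect M (\<lambda>w. C) = C"
  by (simp add: mat_expect_def vec_eq_iff prob_space)

lemma self_adjoint_mat_expect:
  assumes "\<And>w. w \<in> space M \<Longrightarrow> self_adjoint (F w)"
  shows "self_adjoint (mat_expect M F)"
proof -
  have "(LINT w|M. cnj (F w $ j $ i)) = (LINT w|M. F w $ i $ j)" for i j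
    using assms by (intro Bochner_Integration.integral_cong)
      (auto simp: self_adjoint_def vec_eq_iff dest: spec[of _ j])
  then show ?thesis unfolding self_adjoint_def mat_expect_def by (simp add: vec_eq_iff)
qed

lemma integrable_quadform:
  assumes "\<And>i j. integrable M (\<lambda>w. F w $ i $ j)"
  shows "integrable M (\<lambda>w. quadform (F w) v)"
  unfolding quadform_eq_sum using assms by simp

lemma quadform_mat_expect:
  assumes "\<And>i j. integrable M (\<lambda>w. F w $ i $ j)"
  shows "quadform (mat_expect M F) v = (LINT w|M. quadform (F w) v)"
  unfolding quadform_eq_sum mat_expect_def using assms
  by (simp add: Bochner_Integration.integral_sum)

lemma abs_Re_quadform_mat_expect_le:
  fixes F G :: "'a \<Rightarrow> complex^'n^'n"
  assumes F: "\<And>i j. integrable M (\<lambda>w. F w $ i $ j)" and G: "\<And>i j. integrable M (\<lambda>w. G w $ i $ j)"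
    and bound: "\<And>w. w \<in> space M \<Longrightarrow> \<bar>Re (quadform (F w) v)\<bar> \<le> c * Re (quadform (G w) v)"
  shows "\<bar>Re (quadform (mat_expect M F) v)\<bar> \<le> c * Re (quadform (mat_expect M G) v)"
proof -
  have Re_eq: "Re (quadform (mat_expect M H) v) = (LINT w|M. Re (quadform (H w) v))"
    if "\<And>i j. integrable M (\<lambda>w. H w $ i $ j)" for H :: "'a \<Rightarrow> complex^'n^'n"
    using integrable_quadform[OF that] by (simp add: quadform_mat_expect[OF that])
  have "\<bar>LINT w|M. Re (quadform (F w) v)\<bar> \<le> (LINT w|M. \<bar>Re (quadform (F w) v)\<bar>)"
    by (rule integral_abs_bound)
  also have "\<dots> \<le> (LINT w|M. c * Re (quadform (G w) v))"
    using integrable_quadform[OF F] integrable_quadform[OF G] bound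
    by (intro integral_mono) auto
  finally show ?thesis by (simp add: Re_eq[OF F] Re_eq[OF G])
qed

section \<open>Square-integrable random matrices\<close>

definition square_integrable_mat :: "'a measure \<Rightarrow> ('a \<Rightarrow> complex^'n^'m) \<Rightarrow> bool" where
  "square_integrable_mat M Z \<longleftrightarrow>
     (\<forall>i j. (\<lambda>w. Z w $ i $ j) \<in> borel_measurable M \<and> integrable M (\<lambda>w. (cmod (Z w $ i $ j))\<^sup>2))"

lemma integrable_mult_if_square_integrable:
  fixes f g :: "'a \<Rightarrow> 'b::{banach, second_countable_topology, real_normed_div_algebra}"
  assumes [measurable]: "f \<in> borel_measurable M" "g \<in> borel_measurable M"
    and "integrable M (\<lambda>w. (norm (f w))\<^sup>2)" "integrable M (\<lambda>w. (norm (g w))\<^sup>2)"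
  shows "integrable M (\<lambda>w. f w * g w)"
proof (rule Bochner_Integration.integrable_bound)
  show "integrable M (\<lambda>w. (norm (f w))\<^sup>2 + (norm (g w))\<^sup>2)" using assms(3,4) by simp
  show "AE w in M. norm (f w * g w) \<le> norm ((norm (f w))\<^sup>2 + (norm (g w))\<^sup>2)"
  proof (rule AE_I2)
    fix w
    have "norm (f w) * norm (g w) \<le> (norm (f w))\<^sup>2 + (norm (g w))\<^sup>2"
      using sum_squares_bound[of "norm (f w)" "norm (g w)"]
        mult_nonneg_nonneg[OF norm_ge_zero norm_ge_zero, of "f w" "g w"] by linarith
    then show "norm (f w * g w) \<le> norm ((norm (f w))\<^sup>2 + (norm (g w))\<^sup>2)"
      by (simp add: norm_mult)
  qed
qed simp

lemma (in finite_measure) square_integrable_mat_diff_const: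
  assumes "square_integrable_mat M Z"
  shows "square_integrable_mat M (\<lambda>w. Z w - C)"
  unfolding square_integrable_mat_def
proof (intro allI conjI)
  fix i j
  have [measurable]: "(\<lambda>w. Z w $ i $ j) \<in> borel_measurable M"
    using assms unfolding square_integrable_mat_def by blast
  show "(\<lambda>w. (Z w - C) $ i $ j) \<in> borel_measurable M" by simp
  show "integrable M (\<lambda>w. (cmod ((Z w - C) $ i $ j))\<^sup>2)"
  proof (rule Bochner_Integration.integrable_bound)
    have "integrable M (\<lambda>w. (cmod (Z w $ i $ j))\<^sup>2)"
      using assms unfolding square_integrable_mat_def by blast
    then show "integrable M (\<lambda>w. 2 * (cmod (Z w $ i $ j))\<^sup>2 + 2 * (cmod (C $ i $ j))\<^sup>2)"
      by simp
    have "(cmod (z - c))\<^sup>2 \<le> 2 * (cmod z)\<^sup>2 + 2 * (cmod c)\<^sup>2" for z c :: complex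
      using power_mono[OF norm_triangle_ineq4[of z c], of 2] sum_squares_bound[of "cmod z" "cmod c"]
      by (simp add: power2_sum)
    then show "AE w in M. norm ((cmod ((Z w - C) $ i $ j))\<^sup>2)
        \<le> norm (2 * (cmod (Z w $ i $ j))\<^sup>2 + 2 * (cmod (C $ i $ j))\<^sup>2)"
      by simp
  qed simp
qed

lemma square_integrable_mat_scaleR:
  assumes "square_integrable_mat M Z"
  shows "square_integrable_mat M (\<lambda>w. r *\<^sub>R Z w)"
  using assms unfolding square_integrable_mat_def
  by (auto simp: power_mult_distrib intro: borel_measurable_scaleR)

lemma (in finite_measure) square_integrable_mat_imp_integrable:
  assumes "square_integrable_mat M Z"
  shows "integrable M (\<lambda>w. Z w $ i $ j)"
proof -
  have Z_meas: "(\<lambda>w. Z w $ i $ j) \<in> borel_measurable M"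
    and Z_sq: "integrable M (\<lambda>w. (cmod (Z w $ i $ j))\<^sup>2)"
    using assms unfolding square_integrable_mat_def by blast+
  have "integrable M (\<lambda>w. cmod (Z w $ i $ j))"
    by (rule square_integrable_imp_integrable) (use Z_meas Z_sq in simp_all)
  then show ?thesis using Z_meas by (simp add: integrable_norm_iff)
qed

lemma square_integrable_mat_imp_integrable_mult:
  assumes "square_integrable_mat M Z" and "square_integrable_mat M W"
  shows "integrable M (\<lambda>w. (Z w ** W w) $ i $ j)"
proof -
  have "integrable M (\<lambda>w. Z w $ i $ k * W w $ k $ j)" for k
  proof (rule integrable_mult_if_square_integrable)
    show "(\<lambda>w. Z w $ i $ k) \<in> borel_measurable M" "integrable M (\<lambda>w. (norm (Z w $ i $ k))\<^sup>2)"
      using assms(1) unfolding square_integrable_mat_def by blast+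
    show "(\<lambda>w. W w $ k $ j) \<in> borel_measurable M" "integrable M (\<lambda>w. (norm (W w $ k $ j))\<^sup>2)"
      using assms(2) unfolding square_integrable_mat_def by blast+
  qed
  then show ?thesis by (simp add: matrix_matrix_mult_def)
qed

lemma (in finite_measure) integrable_matfun_nth:
  fixes Z :: "'a \<Rightarrow> complex^'n^'n"
  assumes self_adjoint: "\<And>w. w \<in> space M \<Longrightarrow> self_adjoint (Z w)" and Z: "square_integrable_mat M Z"
    and g_measurable: "g \<in> borel_measurable borel" and g: "\<And>x. \<bar>g x\<bar> \<le> 1 + x\<^sup>2"
  shows "integrable M (\<lambda>w. matfun g (Z w) $ i $ j)"
proof (rule Bochner_Integration.integrable_bound)
  define c where "c w = (\<Sum>a\<in>UNIV. \<Sum>b\<in>UNIV. cmod (Z w $ a $ b))" for w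
  have Z_meas: "(\<lambda>w. Z w $ a $ b) \<in> borel_measurable M"
    and Z_sq: "integrable M (\<lambda>w. (cmod (Z w $ a $ b))\<^sup>2)" for a b
    using Z unfolding square_integrable_mat_def by blast+
  show "(\<lambda>w. matfun g (Z w) $ i $ j) \<in> borel_measurable M"
    by (rule borel_measurable_matfun_nth[OF self_adjoint Z_meas g_measurable])
  have "integrable M (\<lambda>w. cmod (Z w $ a $ b) * cmod (Z w $ a' $ b'))" for a b a' b'
    by (rule integrable_mult_if_square_integrable)
      (simp_all add: Z_sq measurable_compose[OF Z_meas borel_measurable_norm])
  then have "integrable M (\<lambda>w. c w * c w)"
    unfolding c_def sum_distrib_left sum_distrib_right by simp
  then show "integrable M (\<lambda>w. real CARD('n) * (1 + (c w)\<^sup>2))"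
    by (simp add: power2_eq_square)
  show "AE w in M. norm (matfun g (Z w) $ i $ j) \<le> norm (real CARD('n) * (1 + (c w)\<^sup>2))"
    using norm_matfun_nth_le[OF self_adjoint g] by (simp add: c_def)
qed

lemma (in prob_space) opnorm_expect_matfun_minus_le:
  fixes A :: "'a \<Rightarrow> complex^'n^'n"
  assumes self_adjoint: "\<And>w. w \<in> space M \<Longrightarrow> self_adjoint (A w)" and A: "square_integrable_mat M A"
    and "g \<in> borel_measurable borel" and g: "\<And>x. \<bar>g x - x\<bar> \<le> x\<^sup>2/2"
  shows "opnorm (mat_expect M (\<lambda>w. matfun g (A w)) - mat_expect M A)
           \<le> 1/2 * opnorm (mat_expect M (\<lambda>w. A w ** A w))"
proof -
  have "\<bar>g x\<bar> \<le> 1 + x\<^sup>2" for x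
    using g[of x] sum_squares_bound[of "\<bar>x\<bar>" 1] abs_triangle_ineq2[of "g x" x]
    by (simp add: power2_abs)
  then have X_int: "integrable M (\<lambda>w. matfun g (A w) $ i $ j)" for i j
    using integrable_matfun_nth[OF self_adjoint A \<open>g \<in> borel_measurable borel\<close>] by blast
  have A_int: "integrable M (\<lambda>w. A w $ i $ j)" and AA_int: "integrable M (\<lambda>w. (A w ** A w) $ i $ j)"
    for i j
    using square_integrable_mat_imp_integrable[OF A] square_integrable_mat_imp_integrable_mult[OF A A]
    by blast+
  have "\<bar>Re (quadform (mat_expect M (\<lambda>w. matfun g (A w) - A w)) v)\<bar>
      \<le> 1/2 * Re (quadform (mat_expect M (\<lambda>w. A w ** A w)) v)" for v
    using X_int A_int AA_int abs_Re_quadform_matfun_diff_le[OF self_adjoint g]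
    by (intro abs_Re_quadform_mat_expect_le) simp_all
  moreover have "self_adjoint (mat_expect M (\<lambda>w. matfun g (A w) - A w))"
    by (intro self_adjoint_mat_expect self_adjoint_diff self_adjoint_matfun self_adjoint)
  ultimately show ?thesis
    unfolding mat_expect_diff[OF X_int A_int, symmetric] by (intro opnorm_le_if_Re_quadform_le) auto
qed

theorem lemmaB4:
  fixes M :: "'a measure" and Y :: "'a \<Rightarrow> complex ^'n ^'n :: finite"
    and psi :: "real \<Rightarrow> real" and \<theta> :: real and S :: "complex ^'n ^'n"
  assumes "prob_space M"
    and psi_meas: "psi \<in> borel_measurable borel"
    and psi_bounds: "\<And>x. - ln (1 - x + x^2/2) \<le> psi x \<and> psi x \<le> ln (1 + x + x^2/2)"
    and Y_sa: "\<And>w. w \<in> space M \<Longrightarrow> self_adjoint (Y w)"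
    and Y_meas: "\<And>i j. (\<lambda>w. Y w $ i $ j) \<in> borel_measurable M"
    and Y_mom2: "\<And>i j. integrable M (\<lambda>w. (cmod (Y w $ i $ j))^2)"
    and theta_pos: "\<theta> > 0"
    and S_sa: "self_adjoint S"
  shows "opnorm (S - mat_expect M Y
                  + (1/\<theta>) *\<^sub>R mat_expect M (\<lambda>w. matfun psi (\<theta> *\<^sub>R (Y w - S))))
         \<le> \<theta>/2 * opnorm (mat_expect M (\<lambda>w. (Y w - S) ** (Y w - S)))"
proof -
  interpret prob_space M by fact
  define A where "A w = \<theta> *\<^sub>R (Y w - S)" for w
  have Y_sq: "square_integrable_mat M Y"
    using Y_meas Y_mom2 by (simp add: square_integrable_mat_def)
  then have A_sq: "square_integrable_mat M A"
    unfolding A_def by (intro square_integrable_mat_scaleR square_integrable_mat_diff_const)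
  have A_sa: "self_adjoint (A w)" if "w \<in> space M" for w
    unfolding A_def by (intro self_adjoint_scaleR self_adjoint_diff Y_sa[OF that] S_sa)
  have psi_close: "\<bar>psi x - x\<bar> \<le> x\<^sup>2/2" for x
    using psi_bounds[of x] by (intro abs_diff_le_half_square_if_ln_bounds) auto
  have A_expect: "mat_expect M A = \<theta> *\<^sub>R (mat_expect M Y - S)"
    unfolding A_def[abs_def] using square_integrable_mat_imp_integrable[OF Y_sq]
    by (simp add: mat_expect_scaleR mat_expect_diff mat_expect_const)
  have "S - mat_expect M Y + (1/\<theta>) *\<^sub>R mat_expect M (\<lambda>w. matfun psi (A w))
      = (1/\<theta>) *\<^sub>R (mat_expect M (\<lambda>w. matfun psi (A w)) - mat_expect M A)"
    unfolding A_expect using theta_pos by (simp add: algebra_simps)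
  then have "opnorm (S - mat_expect M Y + (1/\<theta>) *\<^sub>R mat_expect M (\<lambda>w. matfun psi (A w)))
      = 1/\<theta> * opnorm (mat_expect M (\<lambda>w. matfun psi (A w)) - mat_expect M A)"
    using theta_pos by (simp add: opnorm_scaleR)
  also have "\<dots> \<le> 1/\<theta> * (1/2 * opnorm (mat_expect M (\<lambda>w. A w ** A w)))"
    using opnorm_expect_matfun_minus_le[OF A_sa A_sq psi_meas psi_close] theta_pos
    by (intro mult_left_mono) auto
  also have "mat_expect M (\<lambda>w. A w ** A w) = \<theta>\<^sup>2 *\<^sub>R mat_expect M (\<lambda>w. (Y w - S) ** (Y w - S))"
    by (simp add: A_def mat_expect_scaleR power2_eq_square matrix_scalar_ac flip: scalar_matrix_assoc)
  finally show ?thesis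
    using theta_pos by (simp add: A_def opnorm_scaleR power2_eq_square)
qed

end
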